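(* Let $R$ be a D-regularly nil clean ring and let $e\in R$ be an idempotent. Then the corner ring $eRe$ (with identity $e$) is D-regularly nil clean. In particular, if for some positive integer $n$ the matrix ring $\mathbb{M}_n(R)$ is D-regularly nil clean, then $R$ is D-regularly nil clean.
   Context: All rings are associative with identity $1\neq 0$. $Id(R)$ denotes the set of idempotents, $Nil(R)$ the set of nilpotent elements. A ring $R$ is called D-regularly nil clean if for each $a\in R$ there exists an idempotent $e\in aRa\cap Id(R)$ such that $a(1-e)\in Nil(R)$. *)

theory Defs
  imports "HOL-Algebra.Ring"
begin

definition idems :: "('a, 'm) ring_scheme \<Rightarrow> 'a set" where
  "idems R = {e \<in> carrier R. e \<otimes>\<^bsub>R\<^esub> e = e}"

definition nilps :: "('a, 'm) ring_scheme \<Rightarrow> 'a set" where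
  "nilps R = {x \<in> carrier R. \<exists>k::nat. x [^]\<^bsub>R\<^esub> k = \<zero>\<^bsub>R\<^esub>}"

definition two_sided :: "('a, 'm) ring_scheme \<Rightarrow> 'a \<Rightarrow> 'a set" where
  "two_sided R a = {a \<otimes>\<^bsub>R\<^esub> x \<otimes>\<^bsub>R\<^esub> a | x. x \<in> carrier R}"

definition D_regularly_nil_clean :: "('a, 'm) ring_scheme \<Rightarrow> bool" where
  "D_regularly_nil_clean R \<longleftrightarrow> ring R \<and>
     (\<forall>a \<in> carrier R. \<exists>e \<in> two_sided R a \<inter> idems R.
        a \<otimes>\<^bsub>R\<^esub> (\<one>\<^bsub>R\<^esub> \<ominus>\<^bsub>R\<^esub> e) \<in> nilps R)"

definition corner :: "('a, 'm) ring_scheme \<Rightarrow> 'a \<Rightarrow> 'a ring" where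
  "corner R e = \<lparr> carrier = two_sided R e, mult = mult R, one = e,
                  zero = zero R, add = add R \<rparr>"

text \<open>The n x n matrix ring over R: matrices are functions on index pairs,
  with entries in carrier R for indices < n and \<zero> elsewhere.\<close>
definition mat_ring :: "('a, 'm) ring_scheme \<Rightarrow> nat \<Rightarrow> (nat \<times> nat \<Rightarrow> 'a) ring" where
  "mat_ring R n = \<lparr>
     carrier = {A. (\<forall>i j. i < n \<and> j < n \<longrightarrow> A (i, j) \<in> carrier R) \<and>
                   (\<forall>i j. \<not> (i < n \<and> j < n) \<longrightarrow> A (i, j) = \<zero>\<^bsub>R\<^esub>)},
     mult = (\<lambda>A B (i, j). if i < n \<and> j < n
                then (\<Oplus>\<^bsub>R\<^esub>k\<in>{..<n}. A (i, k) \<otimes>\<^bsub>R\<^esub> B (k, j)) else \<zero>\<^bsub>R\<^esub>),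
     one = (\<lambda>(i, j). if i < n \<and> j < n \<and> i = j then \<one>\<^bsub>R\<^esub> else \<zero>\<^bsub>R\<^esub>),
     zero = (\<lambda>_. \<zero>\<^bsub>R\<^esub>),
     add = (\<lambda>A B (i, j). if i < n \<and> j < n then A (i, j) \<oplus>\<^bsub>R\<^esub> B (i, j) else \<zero>\<^bsub>R\<^esub>) \<rparr>"

end

theory Submission
  imports Defs "HOL-Algebra.RingHom"
begin

text \<open>For a in eRe pick, in R, an idempotent f = axa with a(1 - f) nilpotent. Since
  a = ae = ea, also f = a(exe)a lies in a(eRe)a, and a(e - f) = a(1 - f), so the same f works
  in the corner ring. For matrices, the corner of M_n(R) at the matrix unit E_11 maps onto R
  by reading off the (1,1) entry, and the property passes to surjective homomorphic images,
  which preserve idempotents, the sets aRa and nilpotents.\<close>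

lemma (in ring) two_sided_idem_iff:
  assumes "e \<in> idems R"
  shows "x \<in> two_sided R e \<longleftrightarrow> x \<in> carrier R \<and> e \<otimes> x = x \<and> x \<otimes> e = x"
proof -
  have e: "e \<in> carrier R" "e \<otimes> e = e" using assms by (auto simp: idems_def)
  show ?thesis
  proof
    assume "x \<in> two_sided R e"
    then obtain y where "y \<in> carrier R" "x = e \<otimes> y \<otimes> e" by (auto simp: two_sided_def)
    with e show "x \<in> carrier R \<and> e \<otimes> x = x \<and> x \<otimes> e = x"
      by (auto simp: m_assoc simp flip: m_assoc[of e e])
  next
    assume "x \<in> carrier R \<and> e \<otimes> x = x \<and> x \<otimes> e = x"
    then have "x = e \<otimes> x \<otimes> e" "x \<in> carrier R" by auto
    then show "x \<in> two_sided R e" by (auto simp: two_sided_def)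
  qed
qed

lemma corner_simps:
  "\<one>\<^bsub>corner R e\<^esub> = e" "\<zero>\<^bsub>corner R e\<^esub> = \<zero>\<^bsub>R\<^esub>"
  "x \<otimes>\<^bsub>corner R e\<^esub> y = x \<otimes>\<^bsub>R\<^esub> y" "x \<oplus>\<^bsub>corner R e\<^esub> y = x \<oplus>\<^bsub>R\<^esub> y"
  by (simp_all add: corner_def)

lemma (in ring) carrier_corner:
  assumes "e \<in> idems R"
  shows "carrier (corner R e) = {x \<in> carrier R. e \<otimes> x = x \<and> x \<otimes> e = x}"
  using two_sided_idem_iff[OF assms] by (auto simp: corner_def)

lemma (in ring) ring_corner:
  assumes e: "e \<in> idems R"
  shows "ring (corner R e)"
proof -
  have ec: "e \<in> carrier R" "e \<otimes> e = e" using e by (auto simp: idems_def)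
  show ?thesis
  proof (rule ringI)
    show "abelian_group (corner R e)"
    proof (rule abelian_groupI)
      fix x assume "x \<in> carrier (corner R e)"
      then show "\<exists>y\<in>carrier (corner R e). y \<oplus>\<^bsub>corner R e\<^esub> x = \<zero>\<^bsub>corner R e\<^esub>"
        using ec by (intro bexI[of _ "\<ominus> x"]) (auto simp: carrier_corner[OF e] corner_simps l_neg r_minus l_minus)
    qed (auto simp: carrier_corner[OF e] corner_simps ec r_distr l_distr a_ac)
    show "monoid (corner R e)"
      by (rule monoidI)
        (auto simp: carrier_corner[OF e] corner_simps ec m_assoc simp flip: m_assoc[of e])
  qed (auto simp: carrier_corner[OF e] corner_simps l_distr r_distr)
qed

lemma (in ring) corner_minus:
  assumes e: "e \<in> idems R" and x: "x \<in> carrier (corner R e)" and y: "y \<in> carrier (corner R e)"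
  shows "x \<ominus>\<^bsub>corner R e\<^esub> y = x \<ominus> y"
proof -
  interpret C: ring "corner R e" by (rule ring_corner[OF e])
  have "\<ominus>\<^bsub>corner R e\<^esub> y = \<ominus> y"
    using y e by (intro C.minus_equality)
      (auto simp: carrier_corner[OF e] corner_simps idems_def l_neg r_minus l_minus)
  then show ?thesis by (simp add: a_minus_def corner_simps)
qed

lemma (in ring) nilps_corner:
  assumes e: "e \<in> idems R" and x: "x \<in> nilps R" "x \<in> carrier (corner R e)"
  shows "x \<in> nilps (corner R e)"
proof -
  \<comment> \<open>only positive powers agree: the corner's zeroth power is e\<close>
  have pow: "x [^]\<^bsub>corner R e\<^esub> Suc k = x [^] Suc k" for k
    using x(2) by (induction k) (auto simp: carrier_corner[OF e] corner_simps)
  obtain k :: nat where "x [^] k = \<zero>" using x(1) by (auto simp: nilps_def)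
  then have "x [^]\<^bsub>corner R e\<^esub> Suc k = \<zero>\<^bsub>corner R e\<^esub>"
    using x(2) unfolding pow by (simp add: carrier_corner[OF e] corner_simps)
  then show ?thesis using x(2) unfolding nilps_def by blast
qed

lemma D_regularly_nil_clean_corner:
  fixes R (structure)
  assumes D: "D_regularly_nil_clean R" and e: "e \<in> idems R"
  shows "D_regularly_nil_clean (corner R e)"
proof -
  interpret ring R using D by (simp add: D_regularly_nil_clean_def)
  interpret C: ring "corner R e" by (rule ring_corner[OF e])
  have ec: "e \<in> carrier R" "e \<otimes> e = e" using e by (auto simp: idems_def)
  note carC = carrier_corner[OF e]
  have "\<exists>f \<in> two_sided (corner R e) a \<inter> idems (corner R e).
          a \<otimes> (e \<ominus>\<^bsub>corner R e\<^esub> f) \<in> nilps (corner R e)"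
    if aC: "a \<in> carrier (corner R e)" for a
  proof -
    have a: "a \<in> carrier R" "e \<otimes> a = a" "a \<otimes> e = a" using aC by (auto simp: carC)
    from D a(1) obtain f where f: "f \<in> two_sided R a" "f \<in> idems R" "a \<otimes> (\<one> \<ominus> f) \<in> nilps R"
      by (auto simp: D_regularly_nil_clean_def)
    from f(1) obtain x where x: "x \<in> carrier R" "f = a \<otimes> x \<otimes> a" by (auto simp: two_sided_def)
    have fC: "f \<in> carrier (corner R e)" "f \<otimes> f = f"
      using x a ec f(2) by (auto simp: carC idems_def m_assoc simp flip: m_assoc[of e a])
    have "e \<otimes> x \<otimes> e \<in> carrier (corner R e)"
      using x ec by (auto simp: carC m_assoc simp flip: m_assoc[of e e])
    moreover have "f = a \<otimes> (e \<otimes> x \<otimes> e) \<otimes> a"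
      using x a ec by (simp add: m_assoc) (simp flip: m_assoc[of a e] add: a)
    ultimately have "f \<in> two_sided (corner R e) a" by (auto simp: two_sided_def corner_simps)
    moreover have "f \<in> idems (corner R e)" using fC by (simp add: idems_def corner_simps)
    moreover have "a \<otimes> (e \<ominus>\<^bsub>corner R e\<^esub> f) \<in> nilps (corner R e)"
    proof -
      have "a \<otimes> (e \<ominus>\<^bsub>corner R e\<^esub> f) \<in> carrier (corner R e)"
        using C.m_closed[OF aC C.minus_closed[OF C.one_closed fC(1)]] by (simp add: corner_simps)
      moreover have "a \<otimes> (e \<ominus>\<^bsub>corner R e\<^esub> f) = a \<otimes> (\<one> \<ominus> f)"
        using a fC ec by (simp add: corner_minus[OF e] carC minus_eq r_distr r_minus)
      ultimately show ?thesis using nilps_corner[OF e f(3)] by simp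
    qed
    ultimately show ?thesis by blast
  qed
  then show ?thesis by (simp add: D_regularly_nil_clean_def C.ring_axioms corner_simps)
qed

lemma D_regularly_nil_clean_hom_image:
  fixes R (structure)
  assumes D: "D_regularly_nil_clean S" and R: "ring R"
    and h: "h \<in> ring_hom S R" and surj: "h ` carrier S = carrier R"
  shows "D_regularly_nil_clean R"
proof -
  interpret ring_hom_ring S R h
    using D R h by (intro ring_hom_ringI2) (auto simp: D_regularly_nil_clean_def)
  have "\<exists>e \<in> two_sided R a \<inter> idems R. a \<otimes> (\<one> \<ominus> e) \<in> nilps R" if a: "a \<in> carrier R" for a
  proof -
    obtain s where s: "s \<in> carrier S" "a = h s" using a surj by auto
    from D s(1) obtain f where f: "f \<in> two_sided S s" "f \<in> idems S"
      "s \<otimes>\<^bsub>S\<^esub> (\<one>\<^bsub>S\<^esub> \<ominus>\<^bsub>S\<^esub> f) \<in> nilps S"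
      by (auto simp: D_regularly_nil_clean_def)
    from f(1) obtain x where x: "x \<in> carrier S" "f = s \<otimes>\<^bsub>S\<^esub> x \<otimes>\<^bsub>S\<^esub> s"
      by (auto simp: two_sided_def)
    obtain k :: nat where k: "(s \<otimes>\<^bsub>S\<^esub> (\<one>\<^bsub>S\<^esub> \<ominus>\<^bsub>S\<^esub> f)) [^]\<^bsub>S\<^esub> k = \<zero>\<^bsub>S\<^esub>"
      using f(3) by (auto simp: nilps_def)
    have fS: "f \<in> carrier S" using f(2) by (simp add: idems_def)
    have "h f \<in> two_sided R a" using x s by (auto simp: two_sided_def)
    moreover have "h f \<in> idems R" using f(2) by (auto simp: idems_def simp flip: hom_mult)
    moreover have "a \<otimes> (\<one> \<ominus> h f) = h (s \<otimes>\<^bsub>S\<^esub> (\<one>\<^bsub>S\<^esub> \<ominus>\<^bsub>S\<^esub> f))"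
      using s fS by (simp add: a_minus_def)
    moreover have "h (s \<otimes>\<^bsub>S\<^esub> (\<one>\<^bsub>S\<^esub> \<ominus>\<^bsub>S\<^esub> f)) \<in> nilps R"
    proof -
      have "s \<otimes>\<^bsub>S\<^esub> (\<one>\<^bsub>S\<^esub> \<ominus>\<^bsub>S\<^esub> f) \<in> carrier S" using s fS by simp
      then show ?thesis using k by (auto simp: nilps_def hom_nat_pow[symmetric] intro!: exI[of _ k])
    qed
    ultimately show ?thesis by (metis IntI)
  qed
  then show ?thesis using R by (simp add: D_regularly_nil_clean_def)
qed

lemma (in abelian_monoid) finsum_lessThan_eq_first:
  fixes n :: nat
  assumes "0 < n" "f \<in> {..<n} \<rightarrow> carrier G" "\<And>k. 0 < k \<Longrightarrow> k < n \<Longrightarrow> f k = \<zero>"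
  shows "(\<Oplus>k\<in>{..<n}. f k) = f 0"
proof -
  have "(\<Oplus>k\<in>{..<n}. f k) = (\<Oplus>k\<in>{..<n}. if 0 = k then f k else \<zero>)"
    using assms by (intro finsum_cong) (auto simp: Pi_def simp_implies_def gr0_conv_Suc)
  also have "\<dots> = f 0" using assms by (intro finsum_singleton) auto
  finally show ?thesis .
qed

definition mat_single :: "('a, 'm) ring_scheme \<Rightarrow> 'a \<Rightarrow> nat \<times> nat \<Rightarrow> 'a" where
  "mat_single R a = (\<lambda>(i, j). if i = 0 \<and> j = 0 then a else \<zero>\<^bsub>R\<^esub>)"

context ring
begin

lemma mat_single_closed:
  "0 < n \<Longrightarrow> a \<in> carrier R \<Longrightarrow> mat_single R a \<in> carrier (mat_ring R n)"
  by (auto simp: mat_ring_def mat_single_def)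

lemma mat_single_mult_left:
  assumes n: "0 < n" and a: "a \<in> carrier R" and X: "X \<in> carrier (mat_ring R n)"
  shows "mat_single R a \<otimes>\<^bsub>mat_ring R n\<^esub> X = (\<lambda>(i, j). if i = 0 \<and> j < n then a \<otimes> X (0, j) else \<zero>)"
proof (rule ext, clarify)
  fix i j
  have "(\<Oplus>k\<in>{..<n}. mat_single R a (i, k) \<otimes> X (k, j)) = mat_single R a (i, 0) \<otimes> X (0, j)"
    if "j < n" using n a X that
    by (intro finsum_lessThan_eq_first) (auto simp: mat_ring_def mat_single_def)
  then show "(mat_single R a \<otimes>\<^bsub>mat_ring R n\<^esub> X) (i, j) = (if i = 0 \<and> j < n then a \<otimes> X (0, j) else \<zero>)"
    using n a X by (auto simp: mat_ring_def mat_single_def)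
qed

lemma mat_single_mult_right:
  assumes n: "0 < n" and a: "a \<in> carrier R" and X: "X \<in> carrier (mat_ring R n)"
  shows "X \<otimes>\<^bsub>mat_ring R n\<^esub> mat_single R a = (\<lambda>(i, j). if i < n \<and> j = 0 then X (i, 0) \<otimes> a else \<zero>)"
proof (rule ext, clarify)
  fix i j
  have "(\<Oplus>k\<in>{..<n}. X (i, k) \<otimes> mat_single R a (k, j)) = X (i, 0) \<otimes> mat_single R a (0, j)"
    if "i < n" using n a X that
    by (intro finsum_lessThan_eq_first) (auto simp: mat_ring_def mat_single_def)
  then show "(X \<otimes>\<^bsub>mat_ring R n\<^esub> mat_single R a) (i, j) = (if i < n \<and> j = 0 then X (i, 0) \<otimes> a else \<zero>)"
    using n a X by (auto simp: mat_ring_def mat_single_def)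
qed

lemma mat_single_sandwich:
  assumes n: "0 < n" and a: "a \<in> carrier R" and b: "b \<in> carrier R" and X: "X \<in> carrier (mat_ring R n)"
  shows "mat_single R a \<otimes>\<^bsub>mat_ring R n\<^esub> X \<otimes>\<^bsub>mat_ring R n\<^esub> mat_single R b = mat_single R (a \<otimes> X (0, 0) \<otimes> b)"
proof -
  have aX: "mat_single R a \<otimes>\<^bsub>mat_ring R n\<^esub> X \<in> carrier (mat_ring R n)"
    using n a X unfolding mat_single_mult_left[OF n a X] by (auto simp: mat_ring_def)
  show ?thesis
    unfolding mat_single_mult_right[OF n b aX] unfolding mat_single_mult_left[OF n a X]
    using n b by (auto simp: mat_single_def)
qed

lemma mat_single_mult:
  assumes n: "0 < n" and a: "a \<in> carrier R" and b: "b \<in> carrier R"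
  shows "mat_single R a \<otimes>\<^bsub>mat_ring R n\<^esub> mat_single R b = mat_single R (a \<otimes> b)"
  unfolding mat_single_mult_left[OF n a mat_single_closed[OF n b]]
  using n a by (auto simp: mat_single_def)

lemma mat_single_one_idem: "0 < n \<Longrightarrow> mat_single R \<one> \<in> idems (mat_ring R n)"
  by (simp add: idems_def mat_single_closed mat_single_mult)

lemma two_sided_mat_single_one:
  assumes n: "0 < n"
  shows "two_sided (mat_ring R n) (mat_single R \<one>) = mat_single R ` carrier R"
proof
  show "two_sided (mat_ring R n) (mat_single R \<one>) \<subseteq> mat_single R ` carrier R"
  proof
    fix X assume "X \<in> two_sided (mat_ring R n) (mat_single R \<one>)"
    then obtain Y where Y: "Y \<in> carrier (mat_ring R n)"
      "X = mat_single R \<one> \<otimes>\<^bsub>mat_ring R n\<^esub> Y \<otimes>\<^bsub>mat_ring R n\<^esub> mat_single R \<one>"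
      by (auto simp: two_sided_def)
    moreover have "Y (0, 0) \<in> carrier R" using Y(1) n by (simp add: mat_ring_def)
    ultimately show "X \<in> mat_single R ` carrier R" using n by (simp add: mat_single_sandwich)
  qed
  show "mat_single R ` carrier R \<subseteq> two_sided (mat_ring R n) (mat_single R \<one>)"
  proof
    fix X assume "X \<in> mat_single R ` carrier R"
    then obtain a where a: "a \<in> carrier R" "X = mat_single R a" by auto
    then have "X = mat_single R \<one> \<otimes>\<^bsub>mat_ring R n\<^esub> X \<otimes>\<^bsub>mat_ring R n\<^esub> mat_single R \<one>"
      using n by (simp add: mat_single_sandwich mat_single_closed) (simp add: mat_single_def)
    then show "X \<in> two_sided (mat_ring R n) (mat_single R \<one>)"
      using n a by (auto simp: two_sided_def mat_single_closed)
  qed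
qed

lemma ring_hom_corner_mat_single_one:
  assumes n: "0 < n"
  shows "(\<lambda>X. X (0, 0)) \<in> ring_hom (corner (mat_ring R n) (mat_single R \<one>)) R"
proof -
  have car: "carrier (corner (mat_ring R n) (mat_single R \<one>)) = mat_single R ` carrier R"
    using two_sided_mat_single_one[OF n] by (simp add: corner_def)
  show ?thesis
  proof (rule ring_hom_memI, unfold car)
    fix X Y assume "X \<in> mat_single R ` carrier R" "Y \<in> mat_single R ` carrier R"
    then obtain a b where "a \<in> carrier R" "b \<in> carrier R" "X = mat_single R a" "Y = mat_single R b"
      by auto
    then show "(X \<otimes>\<^bsub>corner (mat_ring R n) (mat_single R \<one>)\<^esub> Y) (0, 0) = X (0, 0) \<otimes> Y (0, 0)"
      and "(X \<oplus>\<^bsub>corner (mat_ring R n) (mat_single R \<one>)\<^esub> Y) (0, 0) = X (0, 0) \<oplus> Y (0, 0)"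
      using n by (simp_all add: corner_simps mat_single_mult) (simp_all add: mat_single_def mat_ring_def)
  qed (auto simp: corner_simps mat_single_def)
qed

lemma D_regularly_nil_clean_of_mat_ring:
  assumes n: "0 < n" and D: "D_regularly_nil_clean (mat_ring R n)"
  shows "D_regularly_nil_clean R"
proof (rule D_regularly_nil_clean_hom_image)
  show "D_regularly_nil_clean (corner (mat_ring R n) (mat_single R \<one>))"
    using D_regularly_nil_clean_corner[OF D mat_single_one_idem[OF n]] .
  show "(\<lambda>X. X (0, 0)) ` carrier (corner (mat_ring R n) (mat_single R \<one>)) = carrier R"
    using two_sided_mat_single_one[OF n] by (simp add: corner_def image_image mat_single_def)
qed (use ring_axioms ring_hom_corner_mat_single_one[OF n] in auto)

end

theorem proposition2p3:
  fixes R :: "('a, 'm) ring_scheme"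
  shows "(\<forall>e \<in> idems R. D_regularly_nil_clean R \<longrightarrow> D_regularly_nil_clean (corner R e))
       \<and> (\<forall>n::nat. n > 0 \<longrightarrow> ring R \<longrightarrow> D_regularly_nil_clean (mat_ring R n)
             \<longrightarrow> D_regularly_nil_clean R)"
  by (simp add: D_regularly_nil_clean_corner ring.D_regularly_nil_clean_of_mat_ring)

end
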